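(* Under the coupling $\bar\pi_{\Lambda_N}$ described in the context, $o\in\mathcal C^{\Lambda_N}$ only if $o$ is connected to $\partial\Lambda_N$ in $\mathcal C^{\Lambda_N}$, i.e. only if there is a nearest-neighbor path of vertices of $\mathcal C^{\Lambda_N}$ from $o$ to a vertex adjacent to $\partial\Lambda_N$.
   Context: Fix $\beta>0$ and a realization of the field $\{h_v\}$. $u\sim v$ if $|u-v|_1=1$; $\partial A=\{v\in\mathbb Z^2\setminus A:u\sim v\text{ for some }u\in A\}$; $\Lambda_N=\{v\in\mathbb Z^2:|v|_\infty\le N\}$; $o$ the origin. $\mu^{\Lambda_N,\pm}$ is the Ising measure on $\Lambda_N$ with weights $e^{-\beta H^{\Lambda_N,\pm}}$, $H^{\Lambda_N,\pm}(\sigma)=-\big(\sum_{u\sim v,\,u,v\in\Lambda_N}\sigma_u\sigma_v\pm\sum_{u\sim v,\,u\in\Lambda_N,v\in\partial\Lambda_N}\sigma_u+\sum_{u\in\Lambda_N}\sigma_uh_u\big)$. The coupling $\bar\pi_{\Lambda_N}$ of $(\sigma^{\Lambda_N,+},\sigma^{\Lambda_N,-})$ is built by sequentially sampling vertices: whenever a vertex $v$ is sampled, given the already-sampled set $V$ and spins on it, let $p_\pm=\mu^{\Lambda_N,\pm}(\sigma_v=1\mid\sigma^{\Lambda_N,\pm}_V)$; draw $U$ uniform on $[0,1]$ and set $\sigma^{\Lambda_N,\pm}_v=-1$ iff $U\le1-p_\pm$. The order of sampling is: $\mathcal C^{\Lambda_N}$ denotes the set of already-sampled $v$ with $\sigma^{\Lambda_N,+}_v>\sigma^{\Lambda_N,-}_v$;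 set $A_0=\partial\Lambda_N$; for $k=0,1,2,\ldots$, at stage $k+1$ set $A_{k+1}=\emptyset$; if $A_k=\emptyset$, sample all remaining unsampled vertices of $\Lambda_N$ in an arbitrary fixed order and stop; otherwise sample (in an arbitrary fixed order) all not-yet-sampled vertices of $\Lambda_N$ adjacent to $A_k$, and add each newly sampled vertex lying in $\mathcal C^{\Lambda_N}$ to $A_{k+1}$. At the end, $\mathcal C^{\Lambda_N}=\{v\in\Lambda_N:\sigma^{\Lambda_N,+}_v>\sigma^{\Lambda_N,-}_v\}$. *)

theory Defs
  imports Complex_Main
begin

type_synonym vtx = "int \<times> int"

definition adj :: "vtx \<Rightarrow> vtx \<Rightarrow> bool" where
  "adj u v \<longleftrightarrow> \<bar>fst u - fst v\<bar> + \<bar>snd u - snd v\<bar> = 1"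

definition bdry :: "vtx set \<Rightarrow> vtx set" where
  "bdry A = {v. v \<notin> A \<and> (\<exists>u\<in>A. adj u v)}"

definition Lam :: "nat \<Rightarrow> vtx set" where
  "Lam N = {v. \<bar>fst v\<bar> \<le> int N \<and> \<bar>snd v\<bar> \<le> int N}"

definition origin :: vtx where "origin = (0, 0)"

definition configs :: "nat \<Rightarrow> (vtx \<Rightarrow> real) set" where
  "configs N = {\<sigma>. (\<forall>u\<in>Lam N. \<sigma> u = 1 \<or> \<sigma> u = -1) \<and> (\<forall>u. u \<notin> Lam N \<longrightarrow> \<sigma> u = 0)}"

text \<open>Hamiltonian; s = 1 for plus, s = -1 for minus boundary condition.
  Internal edges are unordered pairs.\<close>
definition Ham :: "nat \<Rightarrow> real \<Rightarrow> (vtx \<Rightarrow> real) \<Rightarrow> (vtx \<Rightarrow> real) \<Rightarrow> real" where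
  "Ham N s h \<sigma> = - ((\<Sum>e\<in>{{u, v} | u v. u \<in> Lam N \<and> v \<in> Lam N \<and> adj u v}. \<Prod>w\<in>e. \<sigma> w)
      + s * (\<Sum>(u, v)\<in>{(u, v). u \<in> Lam N \<and> v \<in> bdry (Lam N) \<and> adj u v}. \<sigma> u)
      + (\<Sum>u\<in>Lam N. \<sigma> u * h u))"

definition weight :: "real \<Rightarrow> nat \<Rightarrow> real \<Rightarrow> (vtx \<Rightarrow> real) \<Rightarrow> (vtx \<Rightarrow> real) \<Rightarrow> real" where
  "weight \<beta> N s h \<sigma> = exp (- \<beta> * Ham N s h \<sigma>)"

definition condp :: "real \<Rightarrow> nat \<Rightarrow> real \<Rightarrow> (vtx \<Rightarrow> real) \<Rightarrow> vtx set \<Rightarrow> (vtx \<Rightarrow> real) \<Rightarrow> vtx \<Rightarrow> real" where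
  "condp \<beta> N s h V \<xi> v =
     (\<Sum>\<sigma>\<in>{\<sigma>\<in>configs N. (\<forall>u\<in>V. \<sigma> u = \<xi> u) \<and> \<sigma> v = 1}. weight \<beta> N s h \<sigma>)
     / (\<Sum>\<sigma>\<in>{\<sigma>\<in>configs N. \<forall>u\<in>V. \<sigma> u = \<xi> u}. weight \<beta> N s h \<sigma>)"

text \<open>State of the coupling: sampled set, plus/minus spins on it, number of uniforms used,
  current frontier A_k, stage index k, termination flag.\<close>
record cstate =
  Vs :: "vtx set"
  sp :: "vtx \<Rightarrow> real"
  sm :: "vtx \<Rightarrow> real"
  cnt :: nat
  Ak :: "vtx set"
  stg :: nat
  fin :: bool

definition sample1 :: "real \<Rightarrow> nat \<Rightarrow> (vtx \<Rightarrow> real) \<Rightarrow> (nat \<Rightarrow> real) \<Rightarrow> cstate \<Rightarrow> vtx \<Rightarrow> cstate" where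
  "sample1 \<beta> N h U st v =
     (let pp = condp \<beta> N 1 h (Vs st) (sp st) v;
          pm = condp \<beta> N (-1) h (Vs st) (sm st) v;
          x = U (cnt st)
      in st\<lparr>Vs := insert v (Vs st),
            sp := (sp st)(v := (if x \<le> 1 - pp then -1 else 1)),
            sm := (sm st)(v := (if x \<le> 1 - pm then -1 else 1)),
            cnt := Suc (cnt st)\<rparr>)"

definition sample_list :: "real \<Rightarrow> nat \<Rightarrow> (vtx \<Rightarrow> real) \<Rightarrow> (nat \<Rightarrow> real) \<Rightarrow> vtx list \<Rightarrow> cstate \<Rightarrow> cstate" where
  "sample_list \<beta> N h U vs st = fold (\<lambda>v s. sample1 \<beta> N h U s v) vs st"

text \<open>One stage of the exploration. pick k S is the (arbitrary, fixed) order in which the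
  finite set S is sampled at stage k.\<close>
definition stage :: "real \<Rightarrow> nat \<Rightarrow> (vtx \<Rightarrow> real) \<Rightarrow> (nat \<Rightarrow> real) \<Rightarrow> (nat \<Rightarrow> vtx set \<Rightarrow> vtx list)
     \<Rightarrow> cstate \<Rightarrow> cstate" where
  "stage \<beta> N h U pick st =
    (if fin st then st
     else if Ak st = {} then
       (let st' = sample_list \<beta> N h U (pick (Suc (stg st)) (Lam N - Vs st)) st
        in st'\<lparr>Ak := {}, stg := Suc (stg st), fin := True\<rparr>)
     else
       (let S = {v \<in> Lam N. v \<notin> Vs st \<and> (\<exists>a\<in>Ak st. adj a v)};
            st' = sample_list \<beta> N h U (pick (Suc (stg st)) S) st
        in st'\<lparr>Ak := {v \<in> S. sp st' v > sm st' v}, stg := Suc (stg st)\<rparr>))"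

definition init_state :: "nat \<Rightarrow> cstate" where
  "init_state N = \<lparr>Vs = {}, sp = (\<lambda>_. 0), sm = (\<lambda>_. 0), cnt = 0, Ak = bdry (Lam N), stg = 0, fin = False\<rparr>"

text \<open>The procedure terminates within card (Lam N) + 2 stages; further stages do nothing.\<close>
definition final_state :: "real \<Rightarrow> nat \<Rightarrow> (vtx \<Rightarrow> real) \<Rightarrow> (nat \<Rightarrow> real) \<Rightarrow> (nat \<Rightarrow> vtx set \<Rightarrow> vtx list) \<Rightarrow> cstate" where
  "final_state \<beta> N h U pick = (stage \<beta> N h U pick ^^ (card (Lam N) + 3)) (init_state N)"

definition Cset :: "real \<Rightarrow> nat \<Rightarrow> (vtx \<Rightarrow> real) \<Rightarrow> (nat \<Rightarrow> real) \<Rightarrow> (nat \<Rightarrow> vtx set \<Rightarrow> vtx list) \<Rightarrow> vtx set" where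
  "Cset \<beta> N h U pick =
     (let st = final_state \<beta> N h U pick in {v \<in> Lam N. sp st v > sm st v})"

end

(* Every vertex added to the disagreement set during the exploration is adjacent to the
   current frontier, which lies in the disagreement set (or is the boundary itself at the
   first stage), so it is joined to the boundary by a path inside the set. The danger is the
   last stage, which samples everything left once the frontier has died out. At that moment
   every sampled vertex next to an unsampled one has sigma+ <= sigma-, and all vertices next
   to the boundary are sampled, so the boundary condition contributes only a constant
   factor. Monotonicity of the conditional probabilities in the conditioned spins (an
   FKG-type fact: flipping a conditioned spin from - to + amounts to adding the field 2 at its
   neighbours, and the conditional probability of + increases with the field) then gives
   p+ <= p- at every step of that stage; since both spins are decided by the same uniform
   variable, that stage adds no disagreement. *)
theory Submission
  imports Defs "HOL-Library.FuncSet"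
begin

section \<open>The lattice\<close>

lemma adj_sym: "adj u v \<longleftrightarrow> adj v u"
  unfolding adj_def by (simp add: abs_minus_commute add.commute)

lemma adj_irrefl: "\<not> adj u u"
  unfolding adj_def by simp

lemma finite_Lam [simp]: "finite (Lam N)"
proof -
  have "Lam N = {- int N..int N} \<times> {- int N..int N}"
    unfolding Lam_def by (auto simp: abs_le_iff)
  then show ?thesis by simp
qed

lemma bdry_Lam_nonempty: "bdry (Lam N) \<noteq> {}"
proof -
  have "(int N, 0) \<in> Lam N" "(int N + 1, 0) \<notin> Lam N" "adj (int N, 0) (int N + 1, 0)"
    unfolding Lam_def adj_def by auto
  then have "(int N + 1, 0) \<in> bdry (Lam N)"
    unfolding bdry_def by blast
  then show ?thesis by blast
qed

lemma finite_bdry_Lam [simp]: "finite (bdry (Lam N))"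
proof (rule finite_subset)
  show "bdry (Lam N) \<subseteq> Lam (Suc N)"
    unfolding bdry_def Lam_def adj_def by auto
qed simp

lemma finite_configs [simp]: "finite (configs N)"
proof (rule finite_subset)
  show "configs N \<subseteq> (\<lambda>f u. if u \<in> Lam N then f u else 0) ` (Lam N \<rightarrow>\<^sub>E {-1, 1})"
  proof
    fix \<sigma> assume \<sigma>: "\<sigma> \<in> configs N"
    then have "\<sigma> = (\<lambda>u. if u \<in> Lam N then restrict \<sigma> (Lam N) u else 0)"
      unfolding configs_def by auto
    moreover have "restrict \<sigma> (Lam N) \<in> Lam N \<rightarrow>\<^sub>E {-1, 1}"
      using \<sigma> unfolding configs_def by auto
    ultimately show "\<sigma> \<in> (\<lambda>f u. if u \<in> Lam N then f u else 0) ` (Lam N \<rightarrow>\<^sub>E {-1, 1})"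
      by blast
  qed
qed (intro finite_imageI finite_PiE; simp)

definition inner_bdry :: "nat \<Rightarrow> vtx set" where
  "inner_bdry N = {u \<in> Lam N. \<exists>b\<in>bdry (Lam N). adj u b}"

definition exposed :: "nat \<Rightarrow> vtx set \<Rightarrow> vtx \<Rightarrow> bool" where
  "exposed N V w \<longleftrightarrow> (\<exists>x\<in>Lam N - V. adj w x)"

section \<open>The Hamiltonian\<close>

definition lattice_edges :: "nat \<Rightarrow> vtx set set" where
  "lattice_edges N = {{u, v} | u v. u \<in> Lam N \<and> v \<in> Lam N \<and> adj u v}"

definition edge_sum :: "nat \<Rightarrow> (vtx \<Rightarrow> real) \<Rightarrow> real" where
  "edge_sum N \<sigma> = (\<Sum>e\<in>lattice_edges N. \<Prod>w\<in>e. \<sigma> w)"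

definition nbdry :: "nat \<Rightarrow> vtx \<Rightarrow> real" where
  "nbdry N u = real (card {b \<in> bdry (Lam N). adj u b})"

text \<open>The boundary term of \<open>Ham\<close> is a field \<open>s\<close> times the number of boundary neighbours.\<close>
definition eff_field :: "nat \<Rightarrow> real \<Rightarrow> (vtx \<Rightarrow> real) \<Rightarrow> vtx \<Rightarrow> real" where
  "eff_field N s h u = h u + s * nbdry N u"

definition field_sum :: "nat \<Rightarrow> (vtx \<Rightarrow> real) \<Rightarrow> (vtx \<Rightarrow> real) \<Rightarrow> real" where
  "field_sum N g \<sigma> = (\<Sum>u\<in>Lam N. \<sigma> u * g u)"

lemma boundary_pair_sum:
  "(\<Sum>(u, v)\<in>{(u, v). u \<in> Lam N \<and> v \<in> bdry (Lam N) \<and> adj u v}. \<sigma> u) = (\<Sum>u\<in>Lam N. \<sigma> u * nbdry N u)"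
proof -
  have "{(u, v). u \<in> Lam N \<and> v \<in> bdry (Lam N) \<and> adj u v} = Sigma (Lam N) (\<lambda>u. {b \<in> bdry (Lam N). adj u b})"
    by auto
  then show ?thesis
    by (simp add: sum.Sigma[symmetric] nbdry_def mult.commute)
qed

lemma weight_eq:
  "weight \<beta> N s h \<sigma> = exp (\<beta> * edge_sum N \<sigma> + \<beta> * field_sum N (eff_field N s h) \<sigma>)"
proof -
  have "Ham N s h \<sigma> = - (edge_sum N \<sigma> + field_sum N (eff_field N s h) \<sigma>)"
    unfolding Ham_def edge_sum_def lattice_edges_def field_sum_def eff_field_def boundary_pair_sum
    by (simp add: sum_distrib_left sum.distrib algebra_simps)
  then show ?thesis
    unfolding weight_def by (simp add: algebra_simps del: minus_add_distrib)
qed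

lemma weight_pos: "0 < weight \<beta> N s h \<sigma>"
  unfolding weight_def by simp

lemma edge_sum_upd:
  assumes w: "w \<in> Lam N"
  shows "edge_sum N (\<sigma>(w := a)) = edge_sum N (\<sigma>(w := 0)) + a * (\<Sum>u | u \<in> Lam N \<and> adj w u. \<sigma> u)"
proof -
  let ?E = "lattice_edges N" and ?U = "{u. u \<in> Lam N \<and> adj w u}"
  have fin: "finite ?E"
    by (rule finite_subset[of _ "Pow (Lam N)"]) (auto simp: lattice_edges_def)
  have split: "(\<Sum>e\<in>?E. f e) = (\<Sum>e | e \<in> ?E \<and> w \<in> e. f e) + (\<Sum>e | e \<in> ?E \<and> w \<notin> e. f e)" for f
    using sum.Int_Diff[OF fin, of f "{e. w \<in> e}"] by (simp add: Int_def set_diff_eq)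
  have away: "(\<Sum>e | e \<in> ?E \<and> w \<notin> e. \<Prod>x\<in>e. (\<sigma>(w := b)) x) = (\<Sum>e | e \<in> ?E \<and> w \<notin> e. \<Prod>x\<in>e. \<sigma> x)" for b
    by (intro sum.cong prod.cong) auto
  have star: "{e. e \<in> ?E \<and> w \<in> e} = (\<lambda>u. {w, u}) ` ?U"
    unfolding lattice_edges_def using w adj_sym by (auto simp del: split_paired_Ex)
  have inj: "inj_on (\<lambda>u. {w, u}) ?U"
    by (rule inj_onI) (auto simp: doubleton_eq_iff)
  have "(\<Prod>x\<in>{w, u}. (\<sigma>(w := b)) x) = b * \<sigma> u" if "u \<in> ?U" for u b
  proof -
    have "u \<noteq> w" using that adj_irrefl by blast
    then show ?thesis by simp
  qed
  then have near: "(\<Sum>e | e \<in> ?E \<and> w \<in> e. \<Prod>x\<in>e. (\<sigma>(w := b)) x) = b * (\<Sum>u\<in>?U. \<sigma> u)" for b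
    unfolding star sum.reindex[OF inj] sum_distrib_left by simp
  show ?thesis
    unfolding edge_sum_def split[of "\<lambda>e. \<Prod>x\<in>e. (\<sigma>(w := _)) x"] away near by simp
qed

lemma field_sum_add:
  "field_sum N (\<lambda>u. g u + \<delta> u) \<sigma> = field_sum N g \<sigma> + (\<Sum>u\<in>Lam N. \<sigma> u * \<delta> u)"
  unfolding field_sum_def by (simp add: distrib_left sum.distrib)

lemma eff_field_add: "eff_field N s (\<lambda>u. h u + \<delta> u) = (\<lambda>u. eff_field N s h u + \<delta> u)"
  unfolding eff_field_def by (simp add: algebra_simps)

lemma field_sum_upd:
  assumes "w \<in> Lam N"
  shows "field_sum N g (\<sigma>(w := a)) = field_sum N g (\<sigma>(w := 0)) + a * g w"
  unfolding field_sum_def using assms by (simp add: sum.remove)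

lemma weight_flip:
  assumes w: "w \<in> Lam N" and \<sigma>w: "\<sigma> w = -1"
  shows "weight \<beta> N s h (\<sigma>(w := 1))
       = exp (2 * \<beta> * eff_field N s h w) * weight \<beta> N s (\<lambda>u. h u + (if adj w u then 2 else 0)) \<sigma>"
proof -
  let ?S = "\<Sum>u | u \<in> Lam N \<and> adj w u. \<sigma> u"
  have \<sigma>_eq: "\<sigma> = \<sigma>(w := -1)" using \<sigma>w by auto
  have edges: "edge_sum N (\<sigma>(w := 1)) = edge_sum N \<sigma> + 2 * ?S"
    using edge_sum_upd[OF w, of \<sigma> 1] edge_sum_upd[OF w, of \<sigma> "-1"] \<sigma>_eq by simp
  have field: "field_sum N g (\<sigma>(w := 1)) = field_sum N g \<sigma> + 2 * g w" for g
    using field_sum_upd[OF w, of g \<sigma> 1] field_sum_upd[OF w, of g \<sigma> "-1"] \<sigma>_eq by simp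
  have "(\<Sum>u\<in>Lam N. \<sigma> u * (if adj w u then 2 else 0)) = 2 * ?S"
    by (simp add: if_distrib sum.inter_filter sum_distrib_left mult.commute cong: if_cong)
  then have shift: "field_sum N (eff_field N s (\<lambda>u. h u + (if adj w u then 2 else 0))) \<sigma>
      = field_sum N (eff_field N s h) \<sigma> + 2 * ?S"
    unfolding eff_field_add field_sum_add by simp
  show ?thesis
    unfolding weight_eq edges field shift mult_exp_exp by (simp add: algebra_simps)
qed

lemma weight_field_incr_site:
  assumes "w \<in> Lam N"
  shows "weight \<beta> N s (h(w := h w + d)) \<sigma> = exp (\<beta> * d * \<sigma> w) * weight \<beta> N s h \<sigma>"
proof -
  have h: "h(w := h w + d) = (\<lambda>u. h u + (if u = w then d else 0))"
    by auto
  have \<delta>: "(\<Sum>u\<in>Lam N. \<sigma> u * (if u = w then d else 0)) = \<sigma> w * d"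
    using assms by (simp add: if_distrib cong: if_cong)
  show ?thesis
    unfolding h weight_eq eff_field_add field_sum_add \<delta> mult_exp_exp by (simp add: algebra_simps)
qed

section \<open>Conditional probabilities\<close>

definition cylinder :: "nat \<Rightarrow> vtx set \<Rightarrow> (vtx \<Rightarrow> real) \<Rightarrow> (vtx \<Rightarrow> real) set" where
  "cylinder N V \<xi> = {\<sigma> \<in> configs N. \<forall>u\<in>V. \<sigma> u = \<xi> u}"

definition part_fn :: "real \<Rightarrow> nat \<Rightarrow> real \<Rightarrow> (vtx \<Rightarrow> real) \<Rightarrow> (vtx \<Rightarrow> real) set \<Rightarrow> real" where
  "part_fn \<beta> N s h Q = (\<Sum>\<sigma>\<in>Q. weight \<beta> N s h \<sigma>)"

lemma finite_cylinder [simp]: "finite (cylinder N V \<xi>)"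
  unfolding cylinder_def by simp

lemma condp_eq_ratio:
  "condp \<beta> N s h V \<xi> v = part_fn \<beta> N s h {\<sigma> \<in> cylinder N V \<xi>. \<sigma> v = 1} / part_fn \<beta> N s h (cylinder N V \<xi>)"
  unfolding condp_def part_fn_def cylinder_def by (simp add: conj_ac)

lemma condp_cong:
  assumes "\<forall>u\<in>V. \<xi> u = \<xi>' u"
  shows "condp \<beta> N s h V \<xi> v = condp \<beta> N s h V \<xi>' v"
proof -
  have "cylinder N V \<xi> = cylinder N V \<xi>'"
    using assms unfolding cylinder_def by auto
  then show ?thesis
    unfolding condp_eq_ratio by simp
qed

lemma part_fn_nonneg: "0 \<le> part_fn \<beta> N s h Q"
  unfolding part_fn_def by (intro sum_nonneg) (simp add: less_imp_le weight_pos)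

lemma cylinder_nonempty:
  assumes "V \<subseteq> Lam N" "\<forall>u\<in>V. \<xi> u \<in> {-1, 1}"
  shows "(\<lambda>u. if u \<in> V then \<xi> u else if u \<in> Lam N then 1 else 0) \<in> cylinder N V \<xi>"
  using assms unfolding cylinder_def configs_def by auto

lemma part_fn_cylinder_pos:
  assumes "V \<subseteq> Lam N" "\<forall>u\<in>V. \<xi> u \<in> {-1, 1}"
  shows "0 < part_fn \<beta> N s h (cylinder N V \<xi>)"
  unfolding part_fn_def
  by (rule sum_pos2[OF finite_cylinder cylinder_nonempty[OF assms]]) (auto simp: weight_pos less_imp_le)

lemma condp_nonneg: "0 \<le> condp \<beta> N s h V \<xi> v"
  unfolding condp_eq_ratio by (simp add: part_fn_nonneg)

lemma condp_conditioned:
  assumes "v \<in> V" "\<xi> v \<noteq> 1"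
  shows "condp \<beta> N s h V \<xi> v = 0"
proof -
  have none: "{\<sigma> \<in> cylinder N V \<xi>. \<sigma> v = 1} = {}"
    using assms unfolding cylinder_def by auto
  show ?thesis
    unfolding condp_eq_ratio none part_fn_def by simp
qed

lemma condp_eq_by_bij:
  assumes bij: "bij_betw f (cylinder N V \<xi>) (cylinder N V' \<xi>')"
    and val: "\<forall>\<sigma>\<in>cylinder N V \<xi>. f \<sigma> v' = \<sigma> v"
    and wt: "\<forall>\<sigma>\<in>cylinder N V \<xi>. weight \<beta> N s' h' (f \<sigma>) = c * weight \<beta> N s h \<sigma>"
    and c: "c > 0"
  shows "condp \<beta> N s' h' V' \<xi>' v' = condp \<beta> N s h V \<xi> v"
proof -
  have img: "f ` {\<sigma> \<in> cylinder N V \<xi>. \<sigma> v = 1} = {\<tau> \<in> cylinder N V' \<xi>'. \<tau> v' = 1}"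
  proof
    show "f ` {\<sigma> \<in> cylinder N V \<xi>. \<sigma> v = 1} \<subseteq> {\<tau> \<in> cylinder N V' \<xi>'. \<tau> v' = 1}"
      using bij val bij_betw_apply by fastforce
    show "{\<tau> \<in> cylinder N V' \<xi>'. \<tau> v' = 1} \<subseteq> f ` {\<sigma> \<in> cylinder N V \<xi>. \<sigma> v = 1}"
    proof
      fix \<tau> assume \<tau>: "\<tau> \<in> {\<tau> \<in> cylinder N V' \<xi>'. \<tau> v' = 1}"
      then obtain \<sigma> where "\<sigma> \<in> cylinder N V \<xi>" "\<tau> = f \<sigma>"
        using bij unfolding bij_betw_def by auto
      then show "\<tau> \<in> f ` {\<sigma> \<in> cylinder N V \<xi>. \<sigma> v = 1}"
        using \<tau> val by auto
    qed
  qed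
  have bij1: "bij_betw f {\<sigma> \<in> cylinder N V \<xi>. \<sigma> v = 1} {\<tau> \<in> cylinder N V' \<xi>'. \<tau> v' = 1}"
    by (rule bij_betw_subset[OF bij _ img]) auto
  have scale: "part_fn \<beta> N s' h' (f ` Q) = c * part_fn \<beta> N s h Q" if "inj_on f Q" "Q \<subseteq> cylinder N V \<xi>" for Q
    unfolding part_fn_def sum.reindex[OF that(1)] sum_distrib_left using that(2) wt
    by (intro sum.cong) auto
  have "part_fn \<beta> N s' h' {\<tau> \<in> cylinder N V' \<xi>'. \<tau> v' = 1} = c * part_fn \<beta> N s h {\<sigma> \<in> cylinder N V \<xi>. \<sigma> v = 1}"
    using bij1 by (subst img[symmetric], intro scale) (auto simp: bij_betw_def)
  moreover have "part_fn \<beta> N s' h' (cylinder N V' \<xi>') = c * part_fn \<beta> N s h (cylinder N V \<xi>)"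
    using bij by (subst bij_betw_imp_surj_on[OF bij, symmetric], intro scale) (auto simp: bij_betw_def)
  ultimately show ?thesis
    unfolding condp_eq_ratio using c by simp
qed

lemma condp_field_cong:
  assumes "\<forall>u\<in>Lam N - V. eff_field N s h u = eff_field N s' h' u"
  shows "condp \<beta> N s h V \<xi> v = condp \<beta> N s' h' V \<xi> v"
proof -
  let ?g = "eff_field N s h" and ?g' = "eff_field N s' h'"
  define c where "c = exp (\<beta> * (\<Sum>u\<in>Lam N. if u \<in> V then \<xi> u * (?g' u - ?g u) else 0))"
  have "weight \<beta> N s' h' \<sigma> = c * weight \<beta> N s h \<sigma>" if "\<sigma> \<in> cylinder N V \<xi>" for \<sigma>
  proof -
    have "field_sum N ?g' \<sigma> = field_sum N ?g \<sigma> + (\<Sum>u\<in>Lam N. \<sigma> u * (?g' u - ?g u))"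
      using field_sum_add[of N ?g "\<lambda>u. ?g' u - ?g u"] by simp
    also have "(\<Sum>u\<in>Lam N. \<sigma> u * (?g' u - ?g u)) = (\<Sum>u\<in>Lam N. if u \<in> V then \<xi> u * (?g' u - ?g u) else 0)"
      using that assms unfolding cylinder_def by (intro sum.cong) auto
    finally show ?thesis
      unfolding weight_eq c_def mult_exp_exp by (simp add: algebra_simps)
  qed
  then show ?thesis
    by (intro condp_eq_by_bij[where f = id and c = c, symmetric]) (auto simp: c_def)
qed

lemma condp_flip_eq_field:
  assumes w: "w \<in> V" and V: "V \<subseteq> Lam N" and v: "v \<notin> V"
  shows "condp \<beta> N s h V (\<xi>(w := 1)) v
       = condp \<beta> N s (\<lambda>u. h u + (if adj w u then 2 else 0)) V (\<xi>(w := -1)) v"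
proof (rule condp_eq_by_bij)
  have "\<sigma>(w := c) \<in> configs N" if "\<sigma> \<in> configs N" "c \<in> {-1, 1}" for \<sigma> c
    using that w V unfolding configs_def by auto
  then show "bij_betw (\<lambda>\<sigma>. \<sigma>(w := 1)) (cylinder N V (\<xi>(w := -1))) (cylinder N V (\<xi>(w := 1)))"
    using w unfolding cylinder_def
    by (intro bij_betw_byWitness[where f' = "\<lambda>\<sigma>. \<sigma>(w := -1)"]) (auto simp: fun_upd_idem)
  show "\<forall>\<sigma>\<in>cylinder N V (\<xi>(w := -1)). (\<sigma>(w := 1)) v = \<sigma> v"
    using w v by auto
  show "\<forall>\<sigma>\<in>cylinder N V (\<xi>(w := -1)). weight \<beta> N s h (\<sigma>(w := 1))
      = exp (2 * \<beta> * eff_field N s h w) * weight \<beta> N s (\<lambda>u. h u + (if adj w u then 2 else 0)) \<sigma>"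
    using w V by (auto simp: cylinder_def intro!: weight_flip)
qed simp

lemma part_fn_field_incr_site:
  assumes "w \<in> Lam N" "\<forall>\<sigma>\<in>Q. \<sigma> w = a"
  shows "part_fn \<beta> N s (h(w := h w + d)) Q = exp (\<beta> * d * a) * part_fn \<beta> N s h Q"
  unfolding part_fn_def sum_distrib_left weight_field_incr_site[OF assms(1)]
  using assms(2) by (intro sum.cong) auto

section \<open>Monotonicity\<close>

lemma mediant_le_weighted_mediant:
  fixes x1 x2 y1 y2 a b :: real
  assumes "0 < y1" "0 < y2" "0 < b" "b \<le> a" "x2 * y1 \<le> x1 * y2"
  shows "(x1 + x2) / (y1 + y2) \<le> (a * x1 + b * x2) / (a * y1 + b * y2)"
proof -
  have "0 \<le> (a - b) * (x1 * y2 - x2 * y1)"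
    using assms by simp
  then have "(x1 + x2) * (a * y1 + b * y2) \<le> (a * x1 + b * x2) * (y1 + y2)"
    by (simp add: algebra_simps)
  moreover have "0 < y1 + y2" "0 < a * y1 + b * y2"
    using assms by (simp_all add: add_pos_pos)
  ultimately show ?thesis
    by (simp add: divide_le_eq le_divide_eq mult.commute)
qed

text \<open>Split on the spin at \<open>w\<close>: the two resulting cylinders are reweighted by
  \<open>exp (\<beta> * d)\<close> and \<open>exp (- \<beta> * d)\<close>, which moves the ratio towards the cylinder
  with the larger conditional probability.\<close>
lemma condp_field_site_mono:
  assumes \<beta>: "0 \<le> \<beta>" and d: "0 \<le> d" and V: "V \<subseteq> Lam N" and w: "w \<in> Lam N - V"
    and \<xi>: "\<forall>u\<in>V. \<xi> u \<in> {-1, 1}"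
    and cmp: "condp \<beta> N s h (insert w V) (\<xi>(w := -1)) v \<le> condp \<beta> N s h (insert w V) (\<xi>(w := 1)) v"
  shows "condp \<beta> N s h V \<xi> v \<le> condp \<beta> N s (h(w := h w + d)) V \<xi> v"
proof -
  let ?C = "\<lambda>a. cylinder N (insert w V) (\<xi>(w := a))"
  let ?X = "\<lambda>g a. part_fn \<beta> N s g {\<sigma> \<in> ?C a. \<sigma> v = 1}" and ?Y = "\<lambda>g a. part_fn \<beta> N s g (?C a)"
  have C: "cylinder N V \<xi> = ?C 1 \<union> ?C (-1)" "?C 1 \<inter> ?C (-1) = {}"
    using w unfolding cylinder_def configs_def by auto
  have union: "part_fn \<beta> N s g (Q1 \<union> Q2) = part_fn \<beta> N s g Q1 + part_fn \<beta> N s g Q2"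
    if "Q1 \<subseteq> ?C 1" "Q2 \<subseteq> ?C (-1)" for g Q1 Q2
    unfolding part_fn_def using that C(2)
    by (intro sum.union_disjoint) (auto intro: finite_subset[OF _ finite_cylinder])
  have ratio: "condp \<beta> N s g V \<xi> v = (?X g 1 + ?X g (-1)) / (?Y g 1 + ?Y g (-1))" for g
  proof -
    have "{\<sigma> \<in> ?C 1 \<union> ?C (-1). \<sigma> v = 1} = {\<sigma> \<in> ?C 1. \<sigma> v = 1} \<union> {\<sigma> \<in> ?C (-1). \<sigma> v = 1}"
      by auto
    then show ?thesis
      unfolding condp_eq_ratio C(1) by (simp add: union)
  qed
  have incr: "?X (h(w := h w + d)) a = exp (\<beta> * d * a) * ?X h a"
    "?Y (h(w := h w + d)) a = exp (\<beta> * d * a) * ?Y h a" for a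
    using w by (auto intro!: part_fn_field_incr_site simp: cylinder_def)
  have "\<forall>u\<in>insert w V. (\<xi>(w := a)) u \<in> {-1, 1}" if "a \<in> {-1, 1}" for a
    using \<xi> that by simp
  moreover have "insert w V \<subseteq> Lam N"
    using V w by blast
  ultimately have Y: "0 < ?Y h 1" "0 < ?Y h (-1)"
    by (simp_all add: part_fn_cylinder_pos)
  have "?X h (-1) / ?Y h (-1) \<le> ?X h 1 / ?Y h 1"
    using cmp unfolding condp_eq_ratio .
  then have "?X h (-1) * ?Y h 1 \<le> ?X h 1 * ?Y h (-1)"
    using Y by (simp add: divide_le_eq le_divide_eq mult.commute)
  then show ?thesis
    unfolding ratio[of h] ratio[of "h(w := h w + d)"] incr
    by (intro mediant_le_weighted_mediant Y) (use \<beta> d in auto)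
qed

lemma le_by_site_increments:
  fixes f :: "('a \<Rightarrow> real) \<Rightarrow> 'b::preorder"
  assumes incr: "\<And>g w d. w \<in> G \<Longrightarrow> 0 \<le> d \<Longrightarrow> f g \<le> f (g(w := g w + d))"
    and G: "finite G" and le: "\<forall>u. h u \<le> h' u" and eq: "\<forall>u. u \<notin> G \<longrightarrow> h u = h' u"
  shows "f h \<le> f h'"
proof -
  have "\<forall>h'. (\<forall>u. h u \<le> h' u) \<longrightarrow> (\<forall>u. u \<notin> D \<longrightarrow> h u = h' u) \<longrightarrow> f h \<le> f h'"
    if "finite D" "D \<subseteq> G" for D
    using that
  proof (induction D rule: finite_induct)
    case empty
    then show ?case
      by (metis ext empty_iff order_refl)
  next
    case (insert w D)
    show ?case
    proof (intro allI impI)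
      fix h' assume le': "\<forall>u. h u \<le> h' u" and eq': "\<forall>u. u \<notin> insert w D \<longrightarrow> h u = h' u"
      let ?h1 = "h'(w := h w)"
      have "f h \<le> f ?h1"
        using insert.IH[rule_format, of ?h1] insert.prems le' eq' by auto
      also have "f ?h1 \<le> f (?h1(w := ?h1 w + (h' w - h w)))"
        using insert le' by (intro incr) auto
      finally show "f h \<le> f h'"
        by simp
    qed
  qed
  then show ?thesis
    using G le eq by blast
qed

text \<open>Raising the
  field at one site \<open>w\<close> helps as soon as conditioning \<open>w\<close> on \<open>+\<close> beats conditioning
  it on \<open>-\<close>; by \<open>condp_flip_eq_field\<close> the latter is a field increase on a smaller
  unconditioned region.\<close>
lemma condp_mono_field:
  assumes \<beta>: "0 \<le> \<beta>" and "V \<subseteq> Lam N" "\<forall>u\<in>V. \<xi> u \<in> {-1, 1}" "v \<notin> V"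
    and "\<forall>u\<in>Lam N - V. h u \<le> h' u"
  shows "condp \<beta> N s h V \<xi> v \<le> condp \<beta> N s h' V \<xi> v"
  using assms(2-)
proof (induction "card (Lam N - V)" arbitrary: V \<xi> h h' rule: less_induct)
  case less
  note V = less.prems(1) and \<xi> = less.prems(2) and v = less.prems(3)
  have incr: "condp \<beta> N s g V \<xi> v \<le> condp \<beta> N s (g(w := g w + d)) V \<xi> v"
    if w: "w \<in> Lam N - V" and d: "0 \<le> d" for g w d
  proof (rule condp_field_site_mono[OF \<beta> d V w \<xi>])
    show "condp \<beta> N s g (insert w V) (\<xi>(w := -1)) v \<le> condp \<beta> N s g (insert w V) (\<xi>(w := 1)) v"
    proof (cases "w = v")
      case True
      then show ?thesis
        by (simp add: condp_conditioned condp_nonneg)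
    next
      case False
      let ?g' = "\<lambda>u. g u + (if adj w u then 2 else 0)"
      have "card (Lam N - insert w V) < card (Lam N - V)"
        using w by (metis Diff_insert card_Diff1_less finite_Diff finite_Lam)
      moreover have "insert w V \<subseteq> Lam N" "v \<notin> insert w V"
        using V w v False by auto
      moreover have "\<forall>u\<in>insert w V. (\<xi>(w := -1)) u \<in> {-1, 1}"
        using \<xi> by simp
      ultimately have "condp \<beta> N s g (insert w V) (\<xi>(w := -1)) v \<le> condp \<beta> N s ?g' (insert w V) (\<xi>(w := -1)) v"
        by (intro less.hyps) auto
      also have "\<dots> = condp \<beta> N s g (insert w V) (\<xi>(w := 1)) v"
        using \<open>insert w V \<subseteq> Lam N\<close> \<open>v \<notin> insert w V\<close> by (intro condp_flip_eq_field[symmetric]) auto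
      finally show ?thesis .
    qed
  qed
  let ?h'' = "\<lambda>u. if u \<in> Lam N - V then h' u else h u"
  have "condp \<beta> N s h V \<xi> v \<le> condp \<beta> N s ?h'' V \<xi> v"
  proof (rule le_by_site_increments[where f = "\<lambda>g. condp \<beta> N s g V \<xi> v" and G = "Lam N - V"])
    show "\<forall>u. h u \<le> ?h'' u"
      using less.prems(4) by simp
  qed (use incr in auto)
  also have "\<dots> = condp \<beta> N s h' V \<xi> v"
    by (rule condp_field_cong) (simp add: eff_field_def)
  finally show ?case .
qed

lemma condp_flip_mono:
  assumes "0 \<le> \<beta>" "w \<in> V" "V \<subseteq> Lam N" "v \<notin> V" "\<forall>u\<in>V. \<xi> u \<in> {-1, 1}"
  shows "condp \<beta> N s h V (\<xi>(w := -1)) v \<le> condp \<beta> N s h V (\<xi>(w := 1)) v"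
proof -
  have "condp \<beta> N s h V (\<xi>(w := -1)) v
      \<le> condp \<beta> N s (\<lambda>u. h u + (if adj w u then 2 else 0)) V (\<xi>(w := -1)) v"
    using assms by (intro condp_mono_field) auto
  also have "\<dots> = condp \<beta> N s h V (\<xi>(w := 1)) v"
    using assms by (intro condp_flip_eq_field[symmetric])
  finally show ?thesis .
qed

lemma condp_flip_unexposed:
  assumes "w \<in> V" "V \<subseteq> Lam N" "v \<notin> V" "\<not> exposed N V w"
  shows "condp \<beta> N s h V (\<xi>(w := -1)) v = condp \<beta> N s h V (\<xi>(w := 1)) v"
proof -
  have "condp \<beta> N s h V (\<xi>(w := -1)) v
      = condp \<beta> N s (\<lambda>u. h u + (if adj w u then 2 else 0)) V (\<xi>(w := -1)) v"
    using assms(4) unfolding exposed_def by (intro condp_field_cong) (auto simp: eff_field_def)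
  also have "\<dots> = condp \<beta> N s h V (\<xi>(w := 1)) v"
    using assms by (intro condp_flip_eq_field[symmetric])
  finally show ?thesis .
qed

lemma condp_mono_boundary_site:
  assumes "0 \<le> \<beta>" "w \<in> V" "V \<subseteq> Lam N" "v \<notin> V" "\<forall>u\<in>V. \<xi> u \<in> {-1, 1}" "a \<in> {-1, 1}"
    and "exposed N V w \<longrightarrow> \<xi> w \<le> a"
  shows "condp \<beta> N s h V \<xi> v \<le> condp \<beta> N s h V (\<xi>(w := a)) v"
proof -
  have "\<xi> w \<in> {-1, 1}"
    using assms(2,5) by blast
  then consider "\<xi> w = a" | "\<xi> w = -1" "a = 1" | "\<xi> w = 1" "a = -1" "\<not> exposed N V w"
    using assms(6,7) by auto
  then show ?thesis
  proof cases
    case 1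
    then show ?thesis by (simp add: fun_upd_idem)
  next
    case 2
    then show ?thesis
      using condp_flip_mono[OF assms(1-5)] by (simp add: fun_upd_idem)
  next
    case 3
    then show ?thesis
      using condp_flip_unexposed[OF assms(2-4) 3(3)] by (simp add: fun_upd_idem)
  qed
qed

lemma condp_mono_boundary:
  assumes \<beta>: "0 \<le> \<beta>" and V: "V \<subseteq> Lam N" and v: "v \<notin> V"
    and "\<forall>u\<in>V. \<xi> u \<in> {-1, 1}" and \<xi>': "\<forall>u\<in>V. \<xi>' u \<in> {-1, 1}"
    and "\<forall>w\<in>V. exposed N V w \<longrightarrow> \<xi> w \<le> \<xi>' w"
  shows "condp \<beta> N s h V \<xi> v \<le> condp \<beta> N s h V \<xi>' v"
proof -
  have "\<forall>\<xi>. (\<forall>u\<in>V. \<xi> u \<in> {-1, 1}) \<longrightarrow> (\<forall>w\<in>V. exposed N V w \<longrightarrow> \<xi> w \<le> \<xi>' w)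
      \<longrightarrow> (\<forall>u\<in>V - D. \<xi> u = \<xi>' u) \<longrightarrow> condp \<beta> N s h V \<xi> v \<le> condp \<beta> N s h V \<xi>' v"
    if "finite D" "D \<subseteq> V" for D
    using that
  proof (induction D rule: finite_induct)
    case empty
    show ?case
    proof (intro allI impI)
      fix \<xi> assume "\<forall>u\<in>V - {}. \<xi> u = \<xi>' u"
      then have "condp \<beta> N s h V \<xi> v = condp \<beta> N s h V \<xi>' v"
        by (intro condp_cong) simp
      then show "condp \<beta> N s h V \<xi> v \<le> condp \<beta> N s h V \<xi>' v"
        by simp
    qed
  next
    case (insert w D)
    show ?case
    proof (intro allI impI)
      fix \<xi> assume \<xi>: "\<forall>u\<in>V. \<xi> u \<in> {-1, 1}" and le: "\<forall>w\<in>V. exposed N V w \<longrightarrow> \<xi> w \<le> \<xi>' w"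
        and eq: "\<forall>u\<in>V - insert w D. \<xi> u = \<xi>' u"
      have w: "w \<in> V"
        using insert.prems by simp
      have "condp \<beta> N s h V \<xi> v \<le> condp \<beta> N s h V (\<xi>(w := \<xi>' w)) v"
        using \<xi> \<xi>' le w by (intro condp_mono_boundary_site[OF \<beta> w V v]) auto
      also have "\<dots> \<le> condp \<beta> N s h V \<xi>' v"
        using insert.prems insert.hyps(2) \<xi> \<xi>' le eq by (intro insert.IH[rule_format]) auto
      finally show "condp \<beta> N s h V \<xi> v \<le> condp \<beta> N s h V \<xi>' v" .
    qed
  qed
  from this[of V] show ?thesis
    using assms finite_subset[OF V] by simp
qed

text \<open>Once the sites next to \<open>bdry (Lam N)\<close> are conditioned on, the boundary condition
  only contributes a constant factor to the weights.\<close>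
lemma condp_plus_le_minus:
  assumes "0 \<le> \<beta>" "V \<subseteq> Lam N" "inner_bdry N \<subseteq> V" "v \<notin> V"
    and "\<forall>u\<in>V. \<xi>p u \<in> {-1, 1}" "\<forall>u\<in>V. \<xi>m u \<in> {-1, 1}"
    and "\<forall>w\<in>V. exposed N V w \<longrightarrow> \<xi>p w \<le> \<xi>m w"
  shows "condp \<beta> N 1 h V \<xi>p v \<le> condp \<beta> N (-1) h V \<xi>m v"
proof -
  have "nbdry N u = 0" if "u \<in> Lam N - V" for u
    using that assms(3) unfolding nbdry_def inner_bdry_def by auto
  then have "condp \<beta> N 1 h V \<xi>p v = condp \<beta> N (-1) h V \<xi>p v"
    by (intro condp_field_cong) (simp add: eff_field_def)
  also have "\<dots> \<le> condp \<beta> N (-1) h V \<xi>m v"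
    using assms by (intro condp_mono_boundary) auto
  finally show ?thesis .
qed

section \<open>The exploration\<close>

definition spins_ok :: "nat \<Rightarrow> cstate \<Rightarrow> bool" where
  "spins_ok N st \<longleftrightarrow> Vs st \<subseteq> Lam N
    \<and> (\<forall>u\<in>Vs st. sp st u \<in> {-1, 1} \<and> sm st u \<in> {-1, 1})
    \<and> (\<forall>u. u \<notin> Vs st \<longrightarrow> sp st u = 0 \<and> sm st u = 0)"

definition disagree :: "cstate \<Rightarrow> vtx set" where
  "disagree st = {u \<in> Vs st. sm st u < sp st u}"

definition dominated :: "nat \<Rightarrow> cstate \<Rightarrow> bool" where
  "dominated N st \<longleftrightarrow> (\<forall>u\<in>Vs st. exposed N (Vs st) u \<longrightarrow> sp st u \<le> sm st u)"

lemma sample1_simps: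
  "Vs (sample1 \<beta> N h U st v) = insert v (Vs st)"
  "sp (sample1 \<beta> N h U st v) = (sp st)(v := (if U (cnt st) \<le> 1 - condp \<beta> N 1 h (Vs st) (sp st) v then -1 else 1))"
  "sm (sample1 \<beta> N h U st v) = (sm st)(v := (if U (cnt st) \<le> 1 - condp \<beta> N (-1) h (Vs st) (sm st) v then -1 else 1))"
  "Ak (sample1 \<beta> N h U st v) = Ak st"
  "stg (sample1 \<beta> N h U st v) = stg st"
  "fin (sample1 \<beta> N h U st v) = fin st"
  unfolding sample1_def Let_def by simp_all

lemma sample_list_simps [simp]:
  "sample_list \<beta> N h U [] st = st"
  "sample_list \<beta> N h U (v # L) st = sample_list \<beta> N h U L (sample1 \<beta> N h U st v)"
  unfolding sample_list_def by simp_all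

lemma sample_list_fields:
  "Vs (sample_list \<beta> N h U L st) = Vs st \<union> set L"
  "Ak (sample_list \<beta> N h U L st) = Ak st"
  "stg (sample_list \<beta> N h U L st) = stg st"
  "fin (sample_list \<beta> N h U L st) = fin st"
  by (induction L arbitrary: st) (auto simp: sample1_simps)

lemma sample_list_outside:
  assumes "u \<notin> set L"
  shows "sp (sample_list \<beta> N h U L st) u = sp st u" "sm (sample_list \<beta> N h U L st) u = sm st u"
  using assms by (induction L arbitrary: st) (auto simp: sample1_simps)

lemma spins_ok_sample_list:
  assumes "set L \<subseteq> Lam N" "spins_ok N st"
  shows "spins_ok N (sample_list \<beta> N h U L st)"
  using assms by (induction L arbitrary: st) (auto simp: spins_ok_def sample1_simps)

lemma sample1_le:
  assumes "condp \<beta> N 1 h (Vs st) (sp st) v \<le> condp \<beta> N (-1) h (Vs st) (sm st) v"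
  shows "sp (sample1 \<beta> N h U st v) v \<le> sm (sample1 \<beta> N h U st v) v"
  using assms unfolding sample1_simps by auto

lemma disagree_sample_list_dominated:
  assumes \<beta>: "0 \<le> \<beta>"
  shows "set L \<subseteq> Lam N - Vs st \<Longrightarrow> distinct L \<Longrightarrow> spins_ok N st \<Longrightarrow> inner_bdry N \<subseteq> Vs st
    \<Longrightarrow> dominated N st \<Longrightarrow> disagree (sample_list \<beta> N h U L st) = disagree st"
proof (induction L arbitrary: st)
  case Nil
  then show ?case by simp
next
  case (Cons v L)
  let ?st1 = "sample1 \<beta> N h U st v"
  have v: "v \<in> Lam N" "v \<notin> Vs st"
    using Cons.prems(1) by auto
  have "condp \<beta> N 1 h (Vs st) (sp st) v \<le> condp \<beta> N (-1) h (Vs st) (sm st) v"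
    using Cons.prems(3-5) v unfolding spins_ok_def dominated_def
    by (intro condp_plus_le_minus[OF \<beta>]) auto
  then have v_le: "sp ?st1 v \<le> sm ?st1 v"
    by (rule sample1_le)
  have "disagree ?st1 = disagree st"
    using v_le v(2) unfolding disagree_def sample1_simps by auto
  moreover have "dominated N ?st1"
    unfolding dominated_def
  proof (intro ballI impI)
    fix u assume u: "u \<in> Vs ?st1" and "exposed N (Vs ?st1) u"
    then have "exposed N (Vs st) u"
      unfolding exposed_def sample1_simps by auto
    then show "sp ?st1 u \<le> sm ?st1 u"
      using Cons.prems(5) u v_le unfolding dominated_def sample1_simps by auto
  qed
  moreover have "spins_ok N ?st1"
    using spins_ok_sample_list[of "[v]"] Cons.prems(3) v by simp
  moreover have "set L \<subseteq> Lam N - Vs ?st1" "inner_bdry N \<subseteq> Vs ?st1"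
    using Cons.prems by (auto simp: sample1_simps)
  ultimately show ?case
    using Cons.prems(2) Cons.IH[of ?st1] by simp
qed

lemma disagree_sample_list:
  assumes "set L \<inter> Vs st = {}"
  shows "disagree (sample_list \<beta> N h U L st)
       = disagree st \<union> {u \<in> set L. sm (sample_list \<beta> N h U L st) u < sp (sample_list \<beta> N h U L st) u}"
proof -
  have "sp (sample_list \<beta> N h U L st) u = sp st u" "sm (sample_list \<beta> N h U L st) u = sm st u"
    if "u \<in> Vs st" for u
    using assms that sample_list_outside by blast+
  then show ?thesis
    unfolding disagree_def sample_list_fields by auto
qed

definition connected_to_bdry :: "nat \<Rightarrow> vtx set \<Rightarrow> vtx \<Rightarrow> bool" where
  "connected_to_bdry N S u \<longleftrightarrow> (\<exists>p. p \<noteq> [] \<and> hd p = u \<and> set p \<subseteq> S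
     \<and> (\<forall>i. Suc i < length p \<longrightarrow> adj (p ! i) (p ! Suc i))
     \<and> (\<exists>w\<in>bdry (Lam N). adj (last p) w))"

lemma connected_to_bdry_mono: "S \<subseteq> S' \<Longrightarrow> connected_to_bdry N S u \<Longrightarrow> connected_to_bdry N S' u"
  unfolding connected_to_bdry_def by blast

lemma connected_to_bdry_base: "u \<in> S \<Longrightarrow> b \<in> bdry (Lam N) \<Longrightarrow> adj u b \<Longrightarrow> connected_to_bdry N S u"
  unfolding connected_to_bdry_def by (rule exI[of _ "[u]"]) auto

lemma connected_to_bdry_Cons:
  assumes "u \<in> S" "adj u a" "connected_to_bdry N S a"
  shows "connected_to_bdry N S u"
proof -
  obtain p where p: "p \<noteq> []" "hd p = a" "set p \<subseteq> S"
    "\<forall>i. Suc i < length p \<longrightarrow> adj (p ! i) (p ! Suc i)" "\<exists>w\<in>bdry (Lam N). adj (last p) w"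
    using assms(3) unfolding connected_to_bdry_def by blast
  have "\<forall>i. Suc i < length (u # p) \<longrightarrow> adj ((u # p) ! i) ((u # p) ! Suc i)"
    using p(1,2,4) assms(2) by (auto simp: hd_conv_nth nth_Cons split: nat.split)
  then show ?thesis
    unfolding connected_to_bdry_def using p assms(1) by (intro exI[of _ "u # p"]) auto
qed

lemma connected_to_bdry_extend:
  assumes paths: "\<forall>u\<in>C. connected_to_bdry N C u"
    and front: "A = bdry (Lam N) \<or> A \<subseteq> C"
    and new: "\<forall>u\<in>A'. \<exists>a\<in>A. adj u a"
  shows "\<forall>u\<in>C \<union> A'. connected_to_bdry N (C \<union> A') u"
proof
  fix u assume u: "u \<in> C \<union> A'"
  show "connected_to_bdry N (C \<union> A') u"
  proof (cases "u \<in> A'")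
    case True
    then obtain a where a: "a \<in> A" "adj u a"
      using new by blast
    from front show ?thesis
    proof
      assume "A = bdry (Lam N)"
      then show ?thesis
        using connected_to_bdry_base[OF u _ a(2)] a(1) by simp
    next
      assume "A \<subseteq> C"
      then have "connected_to_bdry N (C \<union> A') a"
        using paths a(1) connected_to_bdry_mono[of C "C \<union> A'"] by blast
      then show ?thesis
        using connected_to_bdry_Cons[OF u a(2)] by simp
    qed
  next
    case False
    then show ?thesis
      using u paths connected_to_bdry_mono[of C "C \<union> A'"] by blast
  qed
qed

definition frontier_ok :: "nat \<Rightarrow> cstate \<Rightarrow> bool" where
  "frontier_ok N st \<longleftrightarrow> (Vs st = {} \<and> Ak st = bdry (Lam N))
    \<or> (inner_bdry N \<subseteq> Vs st \<and> Ak st \<subseteq> disagree st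
       \<and> (\<forall>u\<in>disagree st - Ak st. \<not> exposed N (Vs st) u))"

definition explore_inv :: "nat \<Rightarrow> cstate \<Rightarrow> bool" where
  "explore_inv N st \<longleftrightarrow> spins_ok N st
    \<and> (\<forall>u\<in>disagree st. connected_to_bdry N (disagree st) u)
    \<and> (\<not> fin st \<longrightarrow> frontier_ok N st)"

lemma explore_inv_init: "explore_inv N (init_state N)"
  unfolding explore_inv_def frontier_ok_def spins_ok_def disagree_def init_state_def by simp

lemma stage_fill:
  assumes \<beta>: "0 \<le> \<beta>" and pick: "\<forall>k S. finite S \<longrightarrow> distinct (pick k S) \<and> set (pick k S) = S"
    and inv: "explore_inv N st" and "\<not> fin st" "Ak st = {}"
  shows "explore_inv N (stage \<beta> N h U pick st)"
proof -
  let ?L = "pick (Suc (stg st)) (Lam N - Vs st)"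
  let ?st' = "sample_list \<beta> N h U ?L st"
  have L: "distinct ?L" "set ?L = Lam N - Vs st"
    using pick by auto
  have ok: "spins_ok N st" and paths: "\<forall>u\<in>disagree st. connected_to_bdry N (disagree st) u"
    using inv unfolding explore_inv_def by auto
  have "frontier_ok N st"
    using inv assms(4) unfolding explore_inv_def by simp
  moreover have "Ak st \<noteq> bdry (Lam N)"
    using assms(5) bdry_Lam_nonempty by metis
  ultimately have front: "inner_bdry N \<subseteq> Vs st" "\<forall>u\<in>disagree st. \<not> exposed N (Vs st) u"
    using assms(5) unfolding frontier_ok_def by auto
  have "dominated N st"
    using front(2) unfolding dominated_def disagree_def by (blast intro: leI)
  then have "disagree ?st' = disagree st"
    using L ok front(1) by (intro disagree_sample_list_dominated[OF \<beta>]) auto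
  moreover have "spins_ok N ?st'"
    using L ok by (intro spins_ok_sample_list) auto
  moreover have "stage \<beta> N h U pick st = ?st'\<lparr>Ak := {}, stg := Suc (stg st), fin := True\<rparr>"
    using assms(4,5) unfolding stage_def by (simp add: Let_def)
  ultimately show ?thesis
    using paths unfolding explore_inv_def spins_ok_def disagree_def by simp
qed

lemma frontier_ok_explore:
  assumes front: "frontier_ok N st"
    and Vs: "Vs st' = Vs st \<union> {v \<in> Lam N. v \<notin> Vs st \<and> (\<exists>a\<in>Ak st. adj a v)}"
    and D: "disagree st' = disagree st \<union> Ak st'"
  shows "frontier_ok N st'"
proof -
  have "inner_bdry N \<subseteq> Vs st'"
    using front unfolding frontier_ok_def Vs inner_bdry_def by (auto simp: adj_sym)
  moreover have "\<not> exposed N (Vs st') u" if "u \<in> disagree st' - Ak st'" for u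
  proof -
    have "u \<in> disagree st"
      using that D by blast
    then have "u \<in> Ak st \<or> \<not> exposed N (Vs st) u"
      using front unfolding frontier_ok_def disagree_def by auto
    then show ?thesis
      unfolding exposed_def Vs by (auto simp: adj_sym)
  qed
  moreover have "Ak st' \<subseteq> disagree st'"
    using D by blast
  ultimately show ?thesis
    unfolding frontier_ok_def by blast
qed

lemma stage_explore:
  assumes pick: "\<forall>k S. finite S \<longrightarrow> distinct (pick k S) \<and> set (pick k S) = S"
    and inv: "explore_inv N st" and nfin: "\<not> fin st" and nempty: "Ak st \<noteq> {}"
  shows "explore_inv N (stage \<beta> N h U pick st)"
proof -
  define S where "S = {v \<in> Lam N. v \<notin> Vs st \<and> (\<exists>a\<in>Ak st. adj a v)}"
  define L where "L = pick (Suc (stg st)) S"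
  define st' where "st' = sample_list \<beta> N h U L st"
  define A' where "A' = {v \<in> S. sm st' v < sp st' v}"
  define st'' where "st'' = st'\<lparr>Ak := A', stg := Suc (stg st)\<rparr>"
  have L: "set L = S"
    using pick unfolding L_def S_def by simp
  have stage: "stage \<beta> N h U pick st = st''"
    using nfin nempty unfolding stage_def st''_def A'_def st'_def L_def S_def by (simp add: Let_def)
  have Vs: "Vs st'' = Vs st \<union> S"
    using L by (simp add: st''_def st'_def sample_list_fields)
  have "set L \<inter> Vs st = {}"
    unfolding L S_def by blast
  from disagree_sample_list[OF this, of \<beta> N h U, folded st'_def]
  have D: "disagree st'' = disagree st \<union> A'"
    unfolding A'_def L by (simp add: st''_def disagree_def)
  have ok: "spins_ok N st" and paths: "\<forall>u\<in>disagree st. connected_to_bdry N (disagree st) u"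
    and front: "frontier_ok N st"
    using inv nfin unfolding explore_inv_def by auto
  have "spins_ok N st'"
    unfolding st'_def using ok L by (intro spins_ok_sample_list) (auto simp: S_def)
  then have "spins_ok N st''"
    by (simp add: st''_def spins_ok_def)
  moreover have "\<forall>u\<in>disagree st''. connected_to_bdry N (disagree st'') u"
  proof -
    have "Ak st = bdry (Lam N) \<or> Ak st \<subseteq> disagree st"
      using front unfolding frontier_ok_def by blast
    moreover have "\<forall>u\<in>A'. \<exists>a\<in>Ak st. adj u a"
      unfolding A'_def S_def using adj_sym by blast
    ultimately show ?thesis
      unfolding D by (rule connected_to_bdry_extend[OF paths])
  qed
  moreover have "frontier_ok N st''"
  proof (rule frontier_ok_explore[OF front])
    show "Vs st'' = Vs st \<union> {v \<in> Lam N. v \<notin> Vs st \<and> (\<exists>a\<in>Ak st. adj a v)}"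
      using Vs unfolding S_def .
    show "disagree st'' = disagree st \<union> Ak st''"
      using D by (simp add: st''_def)
  qed
  ultimately show ?thesis
    unfolding explore_inv_def stage by simp
qed

lemma explore_inv_stage:
  assumes "0 \<le> \<beta>" "\<forall>k S. finite S \<longrightarrow> distinct (pick k S) \<and> set (pick k S) = S" "explore_inv N st"
  shows "explore_inv N (stage \<beta> N h U pick st)"
proof (cases "fin st")
  case True
  then show ?thesis
    using assms(3) by (simp add: stage_def)
next
  case False
  then show ?thesis
    using stage_fill[OF assms] stage_explore[OF assms(2,3)] by blast
qed

lemma explore_inv_final_state:
  assumes "0 \<le> \<beta>" "\<forall>k S. finite S \<longrightarrow> distinct (pick k S) \<and> set (pick k S) = S"
  shows "explore_inv N (final_state \<beta> N h U pick)"
proof -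
  have "explore_inv N ((stage \<beta> N h U pick ^^ k) (init_state N))" for k
    by (induction k) (simp_all add: explore_inv_init explore_inv_stage[OF assms])
  then show ?thesis
    unfolding final_state_def .
qed

theorem lemma3p19:
  fixes \<beta> :: real and N :: nat and h :: "vtx \<Rightarrow> real" and U :: "nat \<Rightarrow> real"
    and pick :: "nat \<Rightarrow> vtx set \<Rightarrow> vtx list"
  assumes "\<beta> > 0"
    and "\<forall>n. 0 \<le> U n \<and> U n \<le> 1"
    and "\<forall>k S. finite S \<longrightarrow> distinct (pick k S) \<and> set (pick k S) = S"
    and "origin \<in> Cset \<beta> N h U pick"
  shows "\<exists>p. p \<noteq> [] \<and> hd p = origin \<and> set p \<subseteq> Cset \<beta> N h U pick
           \<and> (\<forall>i. Suc i < length p \<longrightarrow> adj (p ! i) (p ! Suc i))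
           \<and> (\<exists>w\<in>bdry (Lam N). adj (last p) w)"
proof -
  \<comment> \<open>The invariant holds after any number of stages. Nor is the range of \<open>U\<close>: the two spins at a site are compared through
    threshold tests on the same value \<open>U n\<close>, whatever it is.\<close>
  let ?st = "final_state \<beta> N h U pick"
  have inv: "explore_inv N ?st"
    using assms(1,3) by (intro explore_inv_final_state) auto
  have "Cset \<beta> N h U pick = {v \<in> Lam N. sm ?st v < sp ?st v}"
    unfolding Cset_def by (simp add: Let_def)
  also have "\<dots> = disagree ?st"
    using inv unfolding explore_inv_def spins_ok_def disagree_def by (auto simp del: split_paired_All)
  finally have "Cset \<beta> N h U pick = disagree ?st" .
  then show ?thesis
    using inv assms(4) unfolding explore_inv_def connected_to_bdry_def by auto
qed

end
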